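(* With $O(2)$ acting on $\mathbb R[x,y]$ by $(\varphi\cdot P)=P\circ\varphi^{-1}$ and stabilizers taken in $O(2)$: (1) for $m\ge1$, the stabilizer of $p_m(x,y)$ is $D_m$, and no polynomial in $\mathbb R[x,y]$ of degree $<m$ has stabilizer equal to $D_m$; (2) for $m\ge2$, the stabilizer of $p_m(x,y)+(x^2+y^2)q_m(x,y)$ is $K_m$, and no polynomial in $\mathbb R[x,y]$ of degree $<m+2$ has stabilizer equal to $K_m$; (3) the stabilizer of $x+xy$ is $K_1=\{\mathrm{Id}\}$, and no polynomial of degree $<2$ has stabilizer $K_1$.
   Context: $\mathbb R^2=\mathbb C$, $z=x+iy$; $O(2)$ the Euclidean orthogonal group; $\sigma_m(z)=e^{2\pi i/m}z$, $\tau(z)=\bar z$; $K_m=\langle\sigma_m\rangle$, $D_m=\langle\sigma_m,\tau\rangle$; $p_m=\mathrm{Re}(z^m)$, $q_m=\mathrm{Im}(z^m)$. Degree means total degree. *)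

theory Defs
  imports "HOL-Analysis.Analysis" "HOL-Computational_Algebra.Polynomial"
begin

text \<open>Bivariate real polynomials R[x,y] are represented as polynomials in y
  whose coefficients are polynomials in x: type real poly poly.\<close>

type_synonym rpoly2 = "real poly poly"

definition X2 :: rpoly2 where "X2 = [: [:0, 1:] :]"
definition Y2 :: rpoly2 where "Y2 = [: 0, 1 :]"

text \<open>Evaluation at the point z = x + i y of R^2 = C.\<close>
definition eval2 :: "rpoly2 \<Rightarrow> complex \<Rightarrow> real" where
  "eval2 P z = poly (map_poly (\<lambda>c. poly c (Re z)) P) (Im z)"

text \<open>Total degree (the zero polynomial gets degree 0 by convention).\<close>
definition deg2 :: "rpoly2 \<Rightarrow> nat" where
  "deg2 P = Max ({0} \<union> {i + degree (coeff P i) | i. coeff P i \<noteq> 0})"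

text \<open>Real and imaginary parts of (x + i y)^m as polynomials.\<close>
fun reim :: "nat \<Rightarrow> rpoly2 \<times> rpoly2" where
  "reim 0 = (1, 0)"
| "reim (Suc n) = (case reim n of (a, b) \<Rightarrow> (a * X2 - b * Y2, a * Y2 + b * X2))"

definition pm :: "nat \<Rightarrow> rpoly2" where "pm m = fst (reim m)"
definition qm :: "nat \<Rightarrow> rpoly2" where "qm m = snd (reim m)"

definition O2 :: "(complex \<Rightarrow> complex) set" where
  "O2 = {\<phi>. orthogonal_transformation \<phi>}"

text \<open>Stabilizer in O(2) for the action (\<phi> . P) = P \<circ> \<phi>^{-1}
  (equality of polynomials is tested as equality of polynomial functions).\<close>
definition stab :: "rpoly2 \<Rightarrow> (complex \<Rightarrow> complex) set" where
  "stab P = {\<phi> \<in> O2. \<forall>z. eval2 P (inv \<phi> z) = eval2 P z}"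

definition sigma :: "nat \<Rightarrow> complex \<Rightarrow> complex" where
  "sigma m z = cis (2 * pi / real m) * z"

definition tau :: "complex \<Rightarrow> complex" where
  "tau z = cnj z"

text \<open>Subgroup generated by a set of maps of finite order (= generated monoid).\<close>
inductive_set gen :: "('a \<Rightarrow> 'a) set \<Rightarrow> ('a \<Rightarrow> 'a) set" for S where
  gen_id: "id \<in> gen S"
| gen_step: "s \<in> S \<Longrightarrow> g \<in> gen S \<Longrightarrow> s \<circ> g \<in> gen S"

definition Km :: "nat \<Rightarrow> (complex \<Rightarrow> complex) set" where
  "Km m = gen {sigma m}"

definition Dm :: "nat \<Rightarrow> (complex \<Rightarrow> complex) set" where
  "Dm m = gen {sigma m, tau}"

end

theory Submission
  imports Defs
begin

(* Identify R^2 with C.  Every element of O(2) is z \<mapsto> a z or z \<mapsto> a (cnj z)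
   with |a| = 1, and since p_m(z) = Re z^m and q_m(z) = Im z^m, the three positive
   statements reduce to evaluating the polynomials at a few points.
   The three minimality statements rest on a polar expansion: if P has total degree
   at most d, then for real r and |u| = 1
        u^d P(r u) = Q(r, u)
   for a complex polynomial Q in which every monomial r^e u^n satisfies e \<le> d,
   |n - d| \<le> e and n + e + d even; that is, the angular frequency n - d of a term is
   bounded by, and congruent modulo 2 to, its radial degree e.  Invariance under the
   rotation by e^(2 pi i/m) kills every term whose frequency is not divisible by m.
   Under the degree bounds of the theorem only the frequencies 0 and \<plusminus>m survive, so
   P(z) = F(|z|) + \<alpha> z^m + \<beta> (cnj z)^m.  Such a P is fixed by a reflection (hence its
   stabilizer is not K_m), and when deg P < m it is radial, hence fixed by the rotation
   by pi/m, which does not belong to D_m. *)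

section \<open>Evaluating bivariate polynomials\<close>

lemma eval2_nested: "eval2 P z = poly (poly P [:Im z:]) (Re z)"
  by (induction P) (auto simp: eval2_def map_poly_pCons)

lemma eval2_mult[simp]: "eval2 (P * Q) z = eval2 P z * eval2 Q z"
  and eval2_add[simp]: "eval2 (P + Q) z = eval2 P z + eval2 Q z"
  and eval2_diff[simp]: "eval2 (P - Q) z = eval2 P z - eval2 Q z"
  and eval2_one[simp]: "eval2 1 z = 1"
  and eval2_power[simp]: "eval2 (P ^ n) z = eval2 P z ^ n"
  and eval2_X2[simp]: "eval2 X2 z = Re z"
  and eval2_Y2[simp]: "eval2 Y2 z = Im z"
  by (simp_all add: eval2_nested X2_def Y2_def poly_power)

lemma eval2_pm_qm: "eval2 (pm n) z = Re (z^n) \<and> eval2 (qm n) z = Im (z^n)"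
proof (induction n)
  case 0 thus ?case by (simp add: pm_def qm_def eval2_nested)
next
  case (Suc n)
  obtain a b where ab: "reim n = (a,b)" by force
  with Suc have "eval2 a z = Re (z^n)" "eval2 b z = Im (z^n)" by (auto simp: pm_def qm_def)
  thus ?case using ab by (simp add: pm_def qm_def)
qed

lemma eval2_sum: "eval2 P w = (\<Sum>i\<le>degree P. poly (coeff P i) (Re w) * Im w ^ i)"
proof -
  have "poly P [:Im w:] = (\<Sum>i\<le>degree P. coeff P i * [:Im w:] ^ i)" by (rule poly_altdef)
  thus ?thesis by (simp add: eval2_nested poly_sum poly_power)
qed

lemma deg2_ge: assumes "coeff P i \<noteq> 0" shows "i + degree (coeff P i) \<le> deg2 P"
proof -
  have "{i + degree (coeff P i) | i. coeff P i \<noteq> 0} \<subseteq> (\<lambda>i. i + degree (coeff P i)) ` {..degree P}"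
    using le_degree by fastforce
  hence fin: "finite ({0} \<union> {i + degree (coeff P i) | i. coeff P i \<noteq> 0})"
    using finite_subset by blast
  show ?thesis unfolding deg2_def using assms by (intro Max_ge[OF fin]) auto
qed

section \<open>The orthogonal group O(2)\<close>

lemma unit_cnj: "cmod u = 1 \<Longrightarrow> u * cnj u = 1"
  by (metis complex_norm_square mult.commute mult_1 of_real_1 power_one)

lemma unit_Re_zero: assumes "cmod w = 1" "Re w = 0" shows "w = \<i> \<or> w = - \<i>"
proof -
  have "Im w ^ 2 = 1" using assms cmod_power2[of w] by simp
  hence "Im w = 1 \<or> Im w = -1" by (simp add: power2_eq_1_iff)
  thus ?thesis using assms(2) by (auto simp: complex_eq_iff)
qed

lemma orthonormal_pair:
  assumes a: "cmod a = 1" and b: "cmod b = 1" and ab: "a \<bullet> b = 0"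
  shows "b = \<i> * a \<or> b = - \<i> * a"
proof -
  have "cmod (b * cnj a) = 1" "Re (b * cnj a) = 0"
    using a b ab by (simp_all add: norm_mult inner_complex_def algebra_simps)
  hence "b * cnj a = \<i> \<or> b * cnj a = - \<i>" by (rule unit_Re_zero)
  moreover have "b = (b * cnj a) * a"
    using unit_cnj[OF a] by (simp add: mult.assoc mult.commute[of "cnj a"])
  ultimately show ?thesis by (metis mult_minus_left)
qed

lemma O2_cases:
  assumes "orthogonal_transformation \<phi>"
  shows "\<exists>a. cmod a = 1 \<and> (\<phi> = (\<lambda>z. a * z) \<or> \<phi> = (\<lambda>z. a * cnj z))"
proof -
  define a b where "a = \<phi> 1" and "b = \<phi> \<i>"
  have lin: "linear \<phi>" using assms orthogonal_transformation_linear by blast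
  have a1: "cmod a = 1" and b1: "cmod b = 1"
    using orthogonal_transformation_norm[OF assms] by (simp_all add: a_def b_def)
  have "a \<bullet> b = 0" using assms unfolding orthogonal_transformation_def a_def b_def
    by (simp add: inner_complex_def)
  hence ba: "b = \<i> * a \<or> b = - \<i> * a" using orthonormal_pair a1 b1 by blast
  have phi: "\<phi> z = Re z *\<^sub>R a + Im z *\<^sub>R b" for z
  proof -
    have "z = Re z *\<^sub>R 1 + Im z *\<^sub>R \<i>" by (simp add: complex_eq_iff)
    hence "\<phi> z = \<phi> (Re z *\<^sub>R 1 + Im z *\<^sub>R \<i>)" by simp
    thus ?thesis using lin by (simp add: linear_add linear_scale a_def b_def)
  qed
  from ba have "\<phi> = (\<lambda>z. a * z) \<or> \<phi> = (\<lambda>z. a * cnj z)"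
    by (auto simp: phi fun_eq_iff scaleR_conv_of_real complex_eq_iff algebra_simps)
  thus ?thesis using a1 by blast
qed

lemma rotation_O2: "cmod a = 1 \<Longrightarrow> orthogonal_transformation (\<lambda>z. a * z)"
  and reflection_O2: "cmod a = 1 \<Longrightarrow> orthogonal_transformation (\<lambda>z. a * cnj z)"
  by (auto simp: orthogonal_transformation linear_iff norm_mult scaleR_conv_of_real algebra_simps)

lemma reflection_not_rotation: "cmod v = 1 \<Longrightarrow> (\<lambda>z. v * cnj z) \<noteq> (\<lambda>z. a * z)"
proof
  assume v: "cmod v = 1" and e: "(\<lambda>z. v * cnj z) = (\<lambda>z. a * z)"
  have "v = a" using fun_cong[OF e, of 1] by simp
  moreover have "- v * \<i> = a * \<i>" using fun_cong[OF e, of \<i>] by simp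
  ultimately have "v = 0" by (simp add: complex_eq_iff)
  thus False using v by simp
qed

lemma stab_iff:
  assumes "orthogonal_transformation \<phi>"
  shows "\<phi> \<in> stab P \<longleftrightarrow> (\<forall>z. eval2 P (\<phi> z) = eval2 P z)"
proof -
  have "bij \<phi>" using assms orthogonal_transformation_bij by blast
  hence inv: "inv \<phi> (\<phi> z) = z" "\<phi> (inv \<phi> z) = z" for z
    by (auto simp: bij_def inv_f_f surj_f_inv_f)
  have "(\<forall>z. eval2 P (inv \<phi> z) = eval2 P z) \<longleftrightarrow> (\<forall>z. eval2 P (\<phi> z) = eval2 P z)"
    by (metis inv)
  thus ?thesis unfolding stab_def O2_def using assms by blast
qed

lemma stab_O2: "\<phi> \<in> stab P \<Longrightarrow> orthogonal_transformation \<phi>"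
  unfolding stab_def O2_def by blast

lemma stab_rotation: "cmod a = 1 \<Longrightarrow> (\<lambda>z. a * z) \<in> stab P \<longleftrightarrow> (\<forall>z. eval2 P (a * z) = eval2 P z)"
  and stab_reflection: "cmod a = 1 \<Longrightarrow>
     (\<lambda>z. a * cnj z) \<in> stab P \<longleftrightarrow> (\<forall>z. eval2 P (a * cnj z) = eval2 P z)"
  using stab_iff rotation_O2 reflection_O2 by blast+

section \<open>The groups K_m and D_m\<close>

definition zeta :: "nat \<Rightarrow> complex" where "zeta m = cis (2 * pi / real m)"

lemma sigma_zeta: "sigma m = (\<lambda>z. zeta m * z)"
  by (auto simp: sigma_def zeta_def)

lemma zeta_unit: "cmod (zeta m) = 1"
  by (simp add: zeta_def)

lemma zeta_pow: "zeta m ^ k = cis (real k * (2 * pi / real m))"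
  unfolding zeta_def by (rule Complex.DeMoivre)

lemma zeta_pow_m: "zeta m ^ m = 1"
  by (cases "m = 0") (simp_all add: zeta_pow)

lemma zeta_pow_eq: assumes "m \<ge> 1" "zeta m ^ n = zeta m ^ d" shows "n mod m = d mod m"
proof -
  have "zeta m ^ k = exp (2 * of_real pi * \<i> * of_nat k / of_nat m)" for k
    by (simp add: zeta_pow cis_conv_exp field_simps)
  thus ?thesis using assms complex_root_unity_eq[of m n d] by simp
qed

lemma root_of_unity_zeta_pow: assumes "m \<ge> 1" "a ^ m = (1::complex)" shows "\<exists>k. a = zeta m ^ k"
proof -
  have "(\<lambda>k. cis (2 * pi * real k / real m)) ` {..<m} = {z. z ^ m = 1}"
    using bij_betw_imp_surj_on[OF Complex.bij_betw_roots_unity[of m]] assms by simp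
  then obtain k where "a = cis (2 * pi * real k / real m)" using assms by blast
  thus ?thesis by (metis zeta_pow times_divide_eq_right mult.commute mult.assoc)
qed

lemma root_of_unity_unit: "m \<ge> 1 \<Longrightarrow> a ^ m = (1::complex) \<Longrightarrow> cmod a = 1"
  using power_eq_1_iff by fastforce

lemma Km_elements: "\<phi> \<in> Km m \<Longrightarrow> \<exists>a. a ^ m = 1 \<and> \<phi> = (\<lambda>z. a * z)"
  unfolding Km_def
proof (induction rule: gen.induct)
  case gen_id
  then show ?case by (intro exI[of _ 1]) auto
next
  case (gen_step s g)
  then obtain a where a: "a ^ m = 1" "g = (\<lambda>z. a * z)" by blast
  have "(zeta m * a) ^ m = 1" using a zeta_pow_m by (simp add: power_mult_distrib)
  moreover have "s \<circ> g = (\<lambda>z. (zeta m * a) * z)" using gen_step a by (auto simp: sigma_zeta)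
  ultimately show ?case by blast
qed

lemma Dm_elements:
  "\<phi> \<in> Dm m \<Longrightarrow> \<exists>a. a ^ m = 1 \<and> (\<phi> = (\<lambda>z. a * z) \<or> \<phi> = (\<lambda>z. a * cnj z))"
  unfolding Dm_def
proof (induction rule: gen.induct)
  case gen_id
  then show ?case by (intro exI[of _ 1]) auto
next
  case (gen_step s g)
  then obtain a where a: "a ^ m = 1" "g = (\<lambda>z. a * z) \<or> g = (\<lambda>z. a * cnj z)" by blast
  have za: "(zeta m * a) ^ m = 1" using a zeta_pow_m by (simp add: power_mult_distrib)
  have ca: "cnj a ^ m = 1" using a by (metis complex_cnj_one complex_cnj_power)
  have "s = sigma m \<or> s = tau" using gen_step.hyps(1) by auto
  moreover have "sigma m \<circ> g = (\<lambda>z. (zeta m * a) * z) \<or> sigma m \<circ> g = (\<lambda>z. (zeta m * a) * cnj z)"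
    using a(2) by (auto simp: sigma_zeta)
  moreover have "tau \<circ> g = (\<lambda>z. cnj a * z) \<or> tau \<circ> g = (\<lambda>z. cnj a * cnj z)"
    using a(2) by (auto simp: tau_def)
  ultimately show ?case using za ca by blast
qed

lemma gen_rotations: "sigma m \<in> S \<Longrightarrow> (\<lambda>z. zeta m ^ k * z) \<in> gen S"
proof (induction k)
  case 0
  have "(\<lambda>z::complex. zeta m ^ 0 * z) = id" by auto
  then show ?case using gen.gen_id by simp
next
  case (Suc k)
  have "sigma m \<circ> (\<lambda>z. zeta m ^ k * z) \<in> gen S" using Suc by (intro gen.gen_step) auto
  moreover have "sigma m \<circ> (\<lambda>z. zeta m ^ k * z) = (\<lambda>z. zeta m ^ Suc k * z)"
    by (auto simp: sigma_zeta)
  ultimately show ?case by simp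
qed

lemma gen_reflections: "sigma m \<in> S \<Longrightarrow> tau \<in> S \<Longrightarrow> (\<lambda>z. zeta m ^ k * cnj z) \<in> gen S"
proof (induction k)
  case 0
  have "tau \<circ> id \<in> gen S" using 0 by (intro gen.gen_step gen.gen_id)
  moreover have "tau \<circ> id = (\<lambda>z::complex. zeta m ^ 0 * cnj z)" by (auto simp: tau_def)
  ultimately show ?case by simp
next
  case (Suc k)
  have "sigma m \<circ> (\<lambda>z. zeta m ^ k * cnj z) \<in> gen S" using Suc by (intro gen.gen_step) auto
  moreover have "sigma m \<circ> (\<lambda>z. zeta m ^ k * cnj z) = (\<lambda>z. zeta m ^ Suc k * cnj z)"
    by (auto simp: sigma_zeta)
  ultimately show ?case by simp
qed

lemma rotation_in_Km: "m \<ge> 1 \<Longrightarrow> a ^ m = 1 \<Longrightarrow> (\<lambda>z. a * z) \<in> Km m"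
  and rotation_in_Dm: "m \<ge> 1 \<Longrightarrow> a ^ m = 1 \<Longrightarrow> (\<lambda>z. a * z) \<in> Dm m"
  and reflection_in_Dm: "m \<ge> 1 \<Longrightarrow> a ^ m = 1 \<Longrightarrow> (\<lambda>z. a * cnj z) \<in> Dm m"
  using root_of_unity_zeta_pow gen_rotations gen_reflections unfolding Km_def Dm_def by blast+

lemma sigma_in_Km: "sigma m \<in> Km m" and sigma_in_Dm: "sigma m \<in> Dm m"
  using gen_rotations[of m _ 1] by (simp_all add: Km_def Dm_def sigma_zeta)

lemma reflection_notin_Km: "cmod v = 1 \<Longrightarrow> (\<lambda>z. v * cnj z) \<notin> Km m"
  using Km_elements reflection_not_rotation by blast

lemma rotation_in_Dm_root: assumes "m \<ge> 1" "(\<lambda>z. c * z) \<in> Dm m" shows "c ^ m = 1"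
proof -
  obtain a where a: "a ^ m = 1" "(\<lambda>z. c * z) = (\<lambda>z. a * z) \<or> (\<lambda>z. c * z) = (\<lambda>z. a * cnj z)"
    using Dm_elements[OF assms(2)] by blast
  have "(\<lambda>z. a * cnj z) \<noteq> (\<lambda>z. c * z)"
    using reflection_not_rotation root_of_unity_unit[OF assms(1) a(1)] by blast
  hence "c = a" using a(2) by (metis mult_1_right)
  thus ?thesis using a(1) by simp
qed

lemma Km_one: "Km 1 = {id}"
  using Km_elements[of _ 1] gen.gen_id[of "{sigma 1}"] unfolding Km_def by fastforce

section \<open>Polar expansion of a polynomial\<close>

text \<open>Evaluation of a complex polynomial Q(r, u) (outer variable u, inner variable r)
  at a real radius r and a complex u.\<close>
definition polar_eval :: "complex poly poly \<Rightarrow> real \<Rightarrow> complex \<Rightarrow> complex" where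
  "polar_eval Q r u = poly (poly Q [:u:]) (of_real r)"

text \<open>Q is a polar expansion of order d of g: u^d g(r u) = Q(r, u) on the unit circle,
  and every monomial r^e u^n of Q has radial degree e \<le> d and angular frequency n - d
  with |n - d| \<le> e and n - d \<equiv> e (mod 2).\<close>
definition polar_expansion :: "nat \<Rightarrow> (complex \<Rightarrow> complex) \<Rightarrow> complex poly poly \<Rightarrow> bool" where
  "polar_expansion d g Q \<longleftrightarrow>
     (\<forall>r u. cmod u = 1 \<longrightarrow> u ^ d * g (of_real r * u) = polar_eval Q r u) \<and>
     (\<forall>n e. coeff (coeff Q n) e \<noteq> 0 \<longrightarrow> e \<le> d \<and> n \<le> d + e \<and> d \<le> n + e \<and> even (n + e + d))"

definition has_polar_expansion :: "nat \<Rightarrow> (complex \<Rightarrow> complex) \<Rightarrow> bool" where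
  "has_polar_expansion d g \<longleftrightarrow> (\<exists>Q. polar_expansion d g Q)"

lemma polar_expansion_bounds: "polar_expansion d g Q \<Longrightarrow> coeff (coeff Q n) e \<noteq> 0 \<Longrightarrow>
   e \<le> d \<and> n \<le> d + e \<and> d \<le> n + e \<and> even (n + e + d)"
  unfolding polar_expansion_def by blast

lemma polar_const: "has_polar_expansion 0 (\<lambda>_. c)"
proof -
  have "polar_expansion 0 (\<lambda>_. c) [:[:c:]:]"
    unfolding polar_expansion_def polar_eval_def by (auto simp: coeff_pCons split: nat.splits)
  thus ?thesis unfolding has_polar_expansion_def by blast
qed

lemma polar_add:
  assumes "has_polar_expansion d g" "has_polar_expansion d h"
  shows "has_polar_expansion d (\<lambda>w. g w + h w)"
proof -
  obtain Q1 Q2 where q: "polar_expansion d g Q1" "polar_expansion d h Q2"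
    using assms has_polar_expansion_def by blast
  have "coeff (coeff (Q1 + Q2) n) e \<noteq> 0 \<Longrightarrow> coeff (coeff Q1 n) e \<noteq> 0 \<or> coeff (coeff Q2 n) e \<noteq> 0"
    for n e by auto
  hence "polar_expansion d (\<lambda>w. g w + h w) (Q1 + Q2)"
    using q unfolding polar_expansion_def polar_eval_def by (simp add: distrib_left) blast
  thus ?thesis unfolding has_polar_expansion_def by blast
qed

lemma polar_smult: assumes "has_polar_expansion d g" shows "has_polar_expansion d (\<lambda>w. c * g w)"
proof -
  obtain Q where q: "polar_expansion d g Q" using assms has_polar_expansion_def by blast
  have "polar_expansion d (\<lambda>w. c * g w) (smult [:c:] Q)"
    using q unfolding polar_expansion_def polar_eval_def by (auto simp: algebra_simps)
  thus ?thesis unfolding has_polar_expansion_def by blast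
qed

lemma polar_raise: assumes "has_polar_expansion d g" shows "has_polar_expansion (Suc d) g"
proof -
  obtain Q where q: "polar_expansion d g Q" using assms has_polar_expansion_def by blast
  have "polar_expansion (Suc d) g (pCons 0 Q)"
    unfolding polar_expansion_def
  proof (rule conjI; (intro allI impI)?)
    fix r u assume "cmod (u::complex) = 1"
    thus "u ^ Suc d * g (of_real r * u) = polar_eval (pCons 0 Q) r u"
      using q unfolding polar_expansion_def polar_eval_def by (simp add: algebra_simps)
  next
    fix n e assume a: "coeff (coeff (pCons 0 Q) n) e \<noteq> 0"
    then obtain k where k: "n = Suc k" by (cases n) auto
    with a have "coeff (coeff Q k) e \<noteq> 0" by auto
    thus "e \<le> Suc d \<and> n \<le> Suc d + e \<and> Suc d \<le> n + e \<and> even (n + e + Suc d)"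
      using polar_expansion_bounds[OF q] k by fastforce
  qed
  thus ?thesis unfolding has_polar_expansion_def by blast
qed

lemma polar_raise_le:
  assumes "has_polar_expansion d g" "d \<le> d'" shows "has_polar_expansion d' g"
  using assms(2,1) by (induction d' rule: dec_induct) (auto intro: polar_raise)

lemma coeff_X_mult: "coeff ([:0, 1:] * (q::complex poly)) e = (if e = 0 then 0 else coeff q (e - 1))"
  by (cases e) (auto simp: coeff_pCons)

text \<open>Multiplying by z = r u multiplies Q by r u^2 (frequency +1, radial degree +1).\<close>
lemma polar_mult_z:
  assumes "has_polar_expansion d g" shows "has_polar_expansion (Suc d) (\<lambda>w. w * g w)"
proof -
  obtain Q where q: "polar_expansion d g Q" using assms has_polar_expansion_def by blast
  have "polar_expansion (Suc d) (\<lambda>w. w * g w) (pCons 0 (pCons 0 (smult [:0,1:] Q)))"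
    unfolding polar_expansion_def
  proof (rule conjI; (intro allI impI)?)
    fix r u assume "cmod (u::complex) = 1"
    thus "u ^ Suc d * (of_real r * u * g (of_real r * u))
          = polar_eval (pCons 0 (pCons 0 (smult [:0,1:] Q))) r u"
      using q unfolding polar_expansion_def polar_eval_def by (simp add: algebra_simps)
  next
    fix n e assume a: "coeff (coeff (pCons 0 (pCons 0 (smult [:0,1:] Q))) n) e \<noteq> 0"
    then obtain k where k: "n = Suc (Suc k)" by (cases n; cases "n - 1") auto
    with a obtain f where f: "e = Suc f" "coeff (coeff Q k) f \<noteq> 0"
      by (cases e) (auto simp: coeff_X_mult)
    thus "e \<le> Suc d \<and> n \<le> Suc d + e \<and> Suc d \<le> n + e \<and> even (n + e + Suc d)"
      using polar_expansion_bounds[OF q f(2)] k by auto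
  qed
  thus ?thesis unfolding has_polar_expansion_def by blast
qed

text \<open>Multiplying by cnj z = r (cnj u) multiplies Q by r (frequency -1, radial degree +1).\<close>
lemma polar_mult_cnj:
  assumes "has_polar_expansion d g" shows "has_polar_expansion (Suc d) (\<lambda>w. cnj w * g w)"
proof -
  obtain Q where q: "polar_expansion d g Q" using assms has_polar_expansion_def by blast
  have "polar_expansion (Suc d) (\<lambda>w. cnj w * g w) (smult [:0,1:] Q)"
    unfolding polar_expansion_def
  proof (rule conjI; (intro allI impI)?)
    fix r u assume u: "cmod (u::complex) = 1"
    have "u ^ Suc d * (cnj (of_real r * u) * g (of_real r * u))
       = of_real r * (u * cnj u) * (u ^ d * g (of_real r * u))"
      by (simp add: algebra_simps)
    also have "\<dots> = of_real r * polar_eval Q r u"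
      using q u unit_cnj unfolding polar_expansion_def by simp
    finally show "u ^ Suc d * (cnj (of_real r * u) * g (of_real r * u))
        = polar_eval (smult [:0,1:] Q) r u"
      unfolding polar_eval_def by simp
  next
    fix n e assume a: "coeff (coeff (smult [:0,1:] Q) n) e \<noteq> 0"
    then obtain f where f: "e = Suc f" "coeff (coeff Q n) f \<noteq> 0"
      by (cases e) (auto simp: coeff_X_mult)
    thus "e \<le> Suc d \<and> n \<le> Suc d + e \<and> Suc d \<le> n + e \<and> even (n + e + Suc d)"
      using polar_expansion_bounds[OF q f(2)] by auto
  qed
  thus ?thesis unfolding has_polar_expansion_def by blast
qed

lemma polar_cong: "has_polar_expansion d g \<Longrightarrow> (\<And>w. g w = h w) \<Longrightarrow> has_polar_expansion d h"
  by (metis ext)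

lemma polar_mult_Re:
  assumes "has_polar_expansion d g" shows "has_polar_expansion (Suc d) (\<lambda>w. of_real (Re w) * g w)"
proof -
  have "has_polar_expansion (Suc d) (\<lambda>w. (1/2) * (w * g w) + (1/2) * (cnj w * g w))"
    by (intro polar_add polar_smult polar_mult_z polar_mult_cnj assms)
  thus ?thesis by (rule polar_cong) (simp add: complex_eq_iff field_simps)
qed

lemma polar_mult_Im:
  assumes "has_polar_expansion d g" shows "has_polar_expansion (Suc d) (\<lambda>w. of_real (Im w) * g w)"
proof -
  have "has_polar_expansion (Suc d) (\<lambda>w. (-\<i>/2) * (w * g w) + (\<i>/2) * (cnj w * g w))"
    by (intro polar_add polar_smult polar_mult_z polar_mult_cnj assms)
  thus ?thesis by (rule polar_cong) (simp add: complex_eq_iff field_simps)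
qed

lemma polar_sum: "finite A \<Longrightarrow> (\<And>i. i \<in> A \<Longrightarrow> has_polar_expansion d (f i)) \<Longrightarrow>
    has_polar_expansion d (\<lambda>w. \<Sum>i\<in>A. f i w)"
proof (induction A rule: finite_induct)
  case empty
  show ?case using polar_raise_le[OF polar_const[of 0]] by simp
next
  case (insert x F)
  hence "has_polar_expansion d (\<lambda>w. f x w + (\<Sum>i\<in>F. f i w))" by (intro polar_add) auto
  thus ?case using insert by simp
qed

lemma polar_monomial: "has_polar_expansion (degree a + i) (\<lambda>w. of_real (poly a (Re w) * Im w ^ i))"
proof (induction i)
  case 0
  show ?case
  proof (induction a)
    case (pCons c p)
    show ?case
    proof (cases "p = 0")
      case False
      hence "has_polar_expansion (Suc (degree p))
               (\<lambda>w. of_real c + of_real (Re w) * of_real (poly p (Re w)))"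
        using pCons by (intro polar_add polar_mult_Re) (auto intro: polar_raise_le[OF polar_const])
      thus ?thesis using False by simp
    qed (use polar_const in simp)
  qed (use polar_const in simp)
next
  case (Suc i)
  have "has_polar_expansion (Suc (degree a + i)) (\<lambda>w. of_real (poly a (Re w) * Im w ^ Suc i))"
    using polar_mult_Im[OF Suc] by (rule polar_cong) (simp add: algebra_simps)
  thus ?case by simp
qed

lemma polar_eval2: assumes "deg2 P \<le> d" shows "has_polar_expansion d (\<lambda>w. of_real (eval2 P w))"
proof -
  have "has_polar_expansion d (\<lambda>w. \<Sum>i\<le>degree P. of_real (poly (coeff P i) (Re w) * Im w ^ i))"
  proof (rule polar_sum)
    fix i
    show "has_polar_expansion d (\<lambda>w. of_real (poly (coeff P i) (Re w) * Im w ^ i))"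
    proof (cases "coeff P i = 0")
      case True
      then show ?thesis using polar_raise_le[OF polar_const[of 0]] by simp
    next
      case False
      hence "degree (coeff P i) + i \<le> d" using deg2_ge[OF False] assms by simp
      thus ?thesis using polar_raise_le[OF polar_monomial] by blast
    qed
  qed simp
  thus ?thesis by (rule polar_cong) (simp add: eval2_sum)
qed

section \<open>Rotation invariance and the resulting normal form\<close>

lemma poly_zero_on_infinite:
  fixes p :: "'a::idom poly"
  assumes "infinite S" "\<And>x. x \<in> S \<Longrightarrow> poly p x = 0" shows "p = 0"
proof (rule ccontr)
  assume "p \<noteq> 0"
  hence "finite {x. poly p x = 0}" by (rule poly_roots_finite)
  moreover have "S \<subseteq> {x. poly p x = 0}" using assms(2) by blast
  ultimately show False using assms(1) finite_subset by blast
qed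

lemma circle_infinite: "infinite {u::complex. cmod u = 1}"
proof
  assume fin: "finite {u::complex. cmod u = 1}"
  define N where "N = Suc (card {u::complex. cmod u = 1})"
  have "{z::complex. z ^ N = 1} \<subseteq> {u. cmod u = 1}"
    using power_eq_1_iff N_def by fastforce
  hence "card {z::complex. z ^ N = 1} \<le> card {u::complex. cmod u = 1}"
    using fin card_mono by blast
  moreover have "card {z::complex. z ^ N = 1} = N" by (rule card_roots_unity_eq) (simp add: N_def)
  ultimately show False using N_def by simp
qed

lemma reals_infinite: "infinite (range complex_of_real)"
  using infinite_UNIV_char_0 by (metis finite_imageD inj_of_real)

lemma polar_eval_swap: "polar_eval Q r u = poly (map_poly (\<lambda>q. poly q (of_real r)) Q) u"
  unfolding polar_eval_def by (induction Q) (auto simp: map_poly_pCons)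

text \<open>If g is invariant under the rotation by the unit c, then every monomial r^e u^n
  occurring in a polar expansion of g has c^n = c^d: since u^d g(r u) is then multiplied
  by c^d when u is replaced by c u, comparing coefficients of u^n gives the claim.\<close>
lemma polar_expansion_rotation:
  assumes q: "polar_expansion d g Q" and c: "cmod c = 1" and inv: "\<And>w. g (c * w) = g w"
    and nz: "coeff (coeff Q n) e \<noteq> 0"
  shows "c ^ n = c ^ d"
proof (rule ccontr)
  assume ne: "c ^ n \<noteq> c ^ d"
  have "poly (coeff Q n) (of_real r) = 0" for r
  proof -
    define P where "P = map_poly (\<lambda>q. poly q (of_real r)) Q"
    have "poly (pcompose P [:0, c:] - smult (c ^ d) P) u = 0" if u: "cmod u = 1" for u
    proof -
      have "poly P (c * u) = (c * u) ^ d * g (of_real r * (c * u))"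
        using q u c unfolding polar_expansion_def P_def polar_eval_swap by (simp add: norm_mult)
      also have "g (of_real r * (c * u)) = g (of_real r * u)"
        using inv[of "of_real r * u"] by (simp add: algebra_simps)
      also have "(c * u) ^ d * g (of_real r * u) = c ^ d * (u ^ d * g (of_real r * u))"
        by (simp add: power_mult_distrib)
      also have "u ^ d * g (of_real r * u) = poly P u"
        using q u unfolding polar_expansion_def P_def polar_eval_swap by simp
      finally show ?thesis by (simp add: poly_pcompose mult.commute[of u])
    qed
    hence "pcompose P [:0, c:] - smult (c ^ d) P = 0"
      using poly_zero_on_infinite[OF circle_infinite] by blast
    hence "coeff (pcompose P [:0, c:] - smult (c ^ d) P) n = 0" by simp
    hence "(c ^ n - c ^ d) * coeff P n = 0"
      by (simp add: coeff_pcompose_linear algebra_simps)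
    thus ?thesis using ne unfolding P_def by (simp add: coeff_map_poly)
  qed
  hence "coeff Q n = 0" using poly_zero_on_infinite[OF reals_infinite] by blast
  thus False using nz by simp
qed

lemma frequency_congruence:
  assumes q: "polar_expansion d (\<lambda>w. of_real (eval2 P w)) Q" and m: "m \<ge> 1"
    and sig: "sigma m \<in> stab P" and nz: "coeff (coeff Q n) e \<noteq> 0"
  shows "n mod m = d mod m"
proof -
  have "\<And>w. eval2 P (zeta m * w) = eval2 P w"
    using sig stab_rotation[OF zeta_unit] sigma_zeta by simp
  thus ?thesis using zeta_pow_eq[OF m polar_expansion_rotation[OF q zeta_unit _ nz]] by simp
qed

lemma polar: "\<exists>u. cmod u = 1 \<and> w = of_real (cmod w) * u"
proof (cases "w = 0")
  case True then show ?thesis by (intro exI[of _ 1]) auto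
next
  case False
  then show ?thesis by (intro exI[of _ "sgn w"]) (auto simp: sgn_eq norm_divide)
qed

lemma polar_expansion_three_terms:
  assumes m: "m \<ge> 1"
    and freq: "\<And>n e. coeff (coeff Q n) e \<noteq> 0 \<Longrightarrow> n = d \<or> (e = m \<and> (n = d + m \<or> n + m = d))"
  defines "\<alpha> \<equiv> coeff (coeff Q (d + m)) m"
    and "\<beta> \<equiv> (if m \<le> d then coeff (coeff Q (d - m)) m else 0)"
  shows "Q = monom (coeff Q d) d + monom (monom \<alpha> m) (d + m) + monom (monom \<beta> m) (d - m)"
    (is "Q = ?Q'")
proof (rule poly_eqI)
  fix n
  show "coeff Q n = coeff ?Q' n"
  proof (cases "n = d")
    case True
    then show ?thesis using m unfolding \<beta>_def by (auto simp: coeff_monom)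
  next
    case nd: False
    show ?thesis
    proof (rule poly_eqI)
      fix e
      have "coeff (coeff Q n) e = (if e = m \<and> (n = d + m \<or> n + m = d) then coeff (coeff Q n) e else 0)"
        using freq[of n e] nd by auto
      also have "\<dots> = coeff (coeff ?Q' n) e"
        using nd m unfolding \<alpha>_def \<beta>_def by (auto simp: coeff_monom)
      finally show "coeff (coeff Q n) e = coeff (coeff ?Q' n) e" .
    qed
  qed
qed

lemma polar_normal_form:
  assumes q: "polar_expansion d g Q" and m: "m \<ge> 1"
    and freq: "\<And>n e. coeff (coeff Q n) e \<noteq> 0 \<Longrightarrow> n = d \<or> (e = m \<and> (n = d + m \<or> n + m = d))"
  defines "\<alpha> \<equiv> coeff (coeff Q (d + m)) m"
    and "\<beta> \<equiv> (if m \<le> d then coeff (coeff Q (d - m)) m else 0)"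
  shows "g w = poly (coeff Q d) (of_real (cmod w)) + \<alpha> * w ^ m + \<beta> * cnj w ^ m"
proof -
  define F where "F = coeff Q d"
  have eq: "Q = monom F d + monom (monom \<alpha> m) (d + m) + monom (monom \<beta> m) (d - m)"
    using polar_expansion_three_terms[OF m freq] unfolding F_def \<alpha>_def \<beta>_def .
  define r where "r = cmod w"
  obtain u where u: "cmod u = 1" and w: "w = of_real r * u" using polar unfolding r_def by blast
  have b: "u ^ (d - m) * \<beta> = u ^ d * (\<beta> * cnj u ^ m)"
  proof (cases "m \<le> d")
    case True
    have "u ^ d = u ^ (d - m) * u ^ m" using True by (simp add: power_add[symmetric])
    hence "u ^ d * cnj u ^ m = u ^ (d - m) * (u * cnj u) ^ m" by (simp add: power_mult_distrib)
    then show ?thesis using unit_cnj[OF u] by (simp add: algebra_simps)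
  qed (simp add: \<beta>_def)
  have "u ^ d * g w = polar_eval Q r u" using q u w unfolding polar_expansion_def by blast
  also have "\<dots> = u ^ d * poly F (of_real r) + u ^ (d + m) * \<alpha> * of_real r ^ m
      + u ^ (d - m) * \<beta> * of_real r ^ m"
    unfolding eq polar_eval_def by (simp add: poly_monom algebra_simps)
  also have "\<dots> = u ^ d * (poly F (of_real r) + of_real r ^ m * (\<alpha> * u ^ m + \<beta> * cnj u ^ m))"
    using b by (auto simp: power_add algebra_simps)
  finally have "g w = poly F (of_real r) + of_real r ^ m * (\<alpha> * u ^ m + \<beta> * cnj u ^ m)"
    using u by auto
  moreover have "of_real r ^ m * (\<alpha> * u ^ m + \<beta> * cnj u ^ m) = \<alpha> * w ^ m + \<beta> * cnj w ^ m"
    by (simp add: w power_mult_distrib algebra_simps)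
  ultimately show ?thesis unfolding F_def r_def by simp
qed

lemma twisting_root: assumes "m \<ge> (1::nat)" shows "\<exists>v. cmod v = 1 \<and> \<gamma> * v ^ m = cnj \<gamma>"
proof (cases "\<gamma> = 0")
  case True then show ?thesis by (intro exI[of _ 1]) auto
next
  case False
  define t where "t = cnj \<gamma> / \<gamma>"
  have t: "cmod t = 1" using False by (simp add: t_def norm_divide)
  hence t0: "t \<noteq> 0" by auto
  define v where "v = cis (Arg t / real m)"
  have "v ^ m = cis (real m * (Arg t / real m))" unfolding v_def by (rule Complex.DeMoivre)
  also have "\<dots> = cis (Arg t)" using assms by simp
  also have "\<dots> = t" using t cis_Arg[OF t0] by (simp add: sgn_eq)
  finally have "\<gamma> * v ^ m = cnj \<gamma>" using False by (simp add: t_def)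
  moreover have "cmod v = 1" by (simp add: v_def)
  ultimately show ?thesis by blast
qed

text \<open>A polynomial in the normal form F(|z|) + \<alpha> z^m + \<beta> (cnj z)^m is fixed by a reflection:
  its value is Re F(|z|) + Re (\<gamma> z^m) with \<gamma> = \<alpha> + cnj \<beta>, and z \<mapsto> v (cnj z) with
  \<gamma> v^m = cnj \<gamma> preserves both terms.\<close>
lemma reflection_in_stab:
  assumes q: "polar_expansion d (\<lambda>w. of_real (eval2 P w)) Q" and m: "m \<ge> 1"
    and freq: "\<And>n e. coeff (coeff Q n) e \<noteq> 0 \<Longrightarrow> n = d \<or> (e = m \<and> (n = d + m \<or> n + m = d))"
  shows "\<exists>v. cmod v = 1 \<and> (\<lambda>z. v * cnj z) \<in> stab P"
proof -
  define F where "F = coeff Q d"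
  define \<alpha> where "\<alpha> = coeff (coeff Q (d + m)) m"
  define \<beta> where "\<beta> = (if m \<le> d then coeff (coeff Q (d - m)) m else 0)"
  define \<gamma> where "\<gamma> = \<alpha> + cnj \<beta>"
  have form: "eval2 P w = Re (poly F (of_real (cmod w))) + Re (\<gamma> * w ^ m)" for w
  proof -
    have e: "of_real (eval2 P w) = poly F (of_real (cmod w)) + \<alpha> * w ^ m + \<beta> * cnj (w ^ m)"
      using polar_normal_form[OF q m freq, of w] by (simp add: F_def \<alpha>_def \<beta>_def)
    have "eval2 P w = Re (poly F (of_real (cmod w)) + \<alpha> * w ^ m + \<beta> * cnj (w ^ m))"
      using arg_cong[OF e, of Re] by (simp only: Re_complex_of_real)
    also have "\<dots> = Re (poly F (of_real (cmod w))) + Re (\<gamma> * w ^ m)"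
      unfolding \<gamma>_def by (simp add: algebra_simps del: complex_cnj_power)
    finally show ?thesis .
  qed
  obtain v where v: "cmod v = 1" "\<gamma> * v ^ m = cnj \<gamma>" using twisting_root m by blast
  have "eval2 P (v * cnj z) = eval2 P z" for z
  proof -
    have "\<gamma> * (v * cnj z) ^ m = cnj (\<gamma> * z ^ m)"
      by (simp add: power_mult_distrib v(2)[symmetric] mult.assoc)
    hence "Re (\<gamma> * (v * cnj z) ^ m) = Re (\<gamma> * z ^ m)" by (metis cnj.sel(1))
    moreover have "cmod (v * cnj z) = cmod z" using v(1) by (simp add: norm_mult)
    ultimately show ?thesis unfolding form by simp
  qed
  thus ?thesis using stab_reflection v(1) by blast
qed

text \<open>If only the frequency 0 occurs, the polynomial is radial, hence fixed by every rotation.\<close>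
lemma rotation_in_stab:
  assumes q: "polar_expansion d (\<lambda>w. of_real (eval2 P w)) Q"
    and freq: "\<And>n e. coeff (coeff Q n) e \<noteq> 0 \<Longrightarrow> n = d" and c: "cmod c = 1"
  shows "(\<lambda>z. c * z) \<in> stab P"
proof -
  have radial: "of_real (eval2 P w) = poly (coeff Q d) (of_real (cmod w))" for w
  proof -
    have "coeff (coeff Q (d + 1)) 1 = 0" "1 \<le> d \<Longrightarrow> coeff (coeff Q (d - 1)) 1 = 0"
      using freq[of "d + 1" 1] freq[of "d - 1" 1] by fastforce+
    thus ?thesis using polar_normal_form[OF q order.refl[of 1], of w] freq by simp
  qed
  have "of_real (eval2 P (c * z)) = (of_real (eval2 P z) :: complex)" for z
    using radial[of "c * z"] radial[of z] c by (simp add: norm_mult)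
  hence "eval2 P (c * z) = eval2 P z" for z using of_real_eq_iff by blast
  thus ?thesis using stab_rotation[OF c] by blast
qed

lemma eval2_polar_expansion: "\<exists>Q. polar_expansion (deg2 P) (\<lambda>w. of_real (eval2 P w)) Q"
  using polar_eval2[of P "deg2 P"] unfolding has_polar_expansion_def by auto

lemma Re_cnj_power: "Re (cnj z ^ m) = Re (z ^ m)"
  by (metis complex_cnj_power cnj.sel(1))

lemma unit_Re_one: assumes "cmod w = 1" "Re w = 1" shows "w = 1"
proof -
  have "Im w ^ 2 = 0" using assms cmod_power2[of w] by simp
  thus ?thesis using assms(2) by (simp add: complex_eq_iff)
qed

lemma stab_value_at_one:
  assumes "cmod a = 1" "\<phi> = (\<lambda>z. a * z) \<or> \<phi> = (\<lambda>z. a * cnj z)" "\<forall>z. eval2 P (\<phi> z) = eval2 P z"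
  shows "eval2 P a = eval2 P 1"
  using assms(2,3) by (metis complex_cnj_one mult_1_right)

lemma stab_pm: assumes m: "m \<ge> 1" shows "stab (pm m) = Dm m"
proof (intro set_eqI iffI)
  fix \<phi> assume \<phi>: "\<phi> \<in> stab (pm m)"
  obtain a where a: "cmod a = 1" "\<phi> = (\<lambda>z. a * z) \<or> \<phi> = (\<lambda>z. a * cnj z)"
    using O2_cases[OF stab_O2[OF \<phi>]] by blast
  have "eval2 (pm m) a = eval2 (pm m) 1"
    using stab_value_at_one[OF a] \<phi> stab_iff[OF stab_O2[OF \<phi>]] by blast
  hence "Re (a ^ m) = 1" by (simp add: eval2_pm_qm)
  hence "a ^ m = 1" using unit_Re_one a(1) by (simp add: norm_power)
  thus "\<phi> \<in> Dm m" using a(2) rotation_in_Dm reflection_in_Dm m by auto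
next
  fix \<phi> assume "\<phi> \<in> Dm m"
  then obtain a where a: "a ^ m = 1" "\<phi> = (\<lambda>z. a * z) \<or> \<phi> = (\<lambda>z. a * cnj z)"
    using Dm_elements by blast
  have au: "cmod a = 1" using root_of_unity_unit m a by blast
  have "(a * z) ^ m = z ^ m" "(a * cnj z) ^ m = cnj (z ^ m)" for z
    using a(1) by (simp_all add: power_mult_distrib)
  thus "\<phi> \<in> stab (pm m)"
    using a(2) stab_rotation[OF au] stab_reflection[OF au] by (auto simp: eval2_pm_qm Re_cnj_power)
qed

lemma mod_eq_close: assumes "n mod m = d mod (m::nat)" "n < d + m" "d < n + m" shows "n = d"
proof -
  have "m dvd (max n d - min n d)"
    using assms(1) mod_eq_dvd_iff_nat by (metis max_def min_def nat_le_linear)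
  moreover have "max n d - min n d < m" using assms(2,3) by linarith
  ultimately have "max n d - min n d = 0" by (metis gr0I nat_dvd_not_less)
  thus ?thesis by linarith
qed

lemma low_degree_not_Dm: assumes m: "m \<ge> 1" and dP: "deg2 P < m" shows "stab P \<noteq> Dm m"
proof
  assume st: "stab P = Dm m"
  obtain Q where q: "polar_expansion (deg2 P) (\<lambda>w. of_real (eval2 P w)) Q"
    using eval2_polar_expansion by blast
  have freq: "n = deg2 P" if nz: "coeff (coeff Q n) e \<noteq> 0" for n e
  proof (rule mod_eq_close)
    show "n mod m = deg2 P mod m" using frequency_congruence[OF q m _ nz] st sigma_in_Dm by blast
    show "n < deg2 P + m" "deg2 P < n + m" using polar_expansion_bounds[OF q nz] dP by auto
  qed
  define c where "c = cis (pi / real m)"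
  have "(\<lambda>z. c * z) \<in> Dm m" using rotation_in_stab[OF q freq] st by (simp add: c_def)
  hence "c ^ m = 1" using rotation_in_Dm_root m by blast
  moreover have "c ^ m = cis (real m * (pi / real m))" unfolding c_def by (rule Complex.DeMoivre)
  ultimately show False using m by simp
qed

lemma eval2_twisted: "eval2 (pm m + (X2^2 + Y2^2) * qm m) z = Re (z ^ m) + cmod z ^ 2 * Im (z ^ m)"
  by (simp add: eval2_pm_qm cmod_power2)

text \<open>If the O(2)-element with parameter a fixes the twisted polynomial, evaluating at
  1 and 2 gives Re A + Im A = 1 and Re A + 4 Im A = 1 for A = a^m, so a^m = 1.\<close>
lemma twisted_root:
  assumes a: "cmod a = 1" "\<phi> = (\<lambda>z. a * z) \<or> \<phi> = (\<lambda>z. a * cnj z)"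
    and inv: "\<And>z. Re (\<phi> z ^ m) + cmod (\<phi> z) ^ 2 * Im (\<phi> z ^ m) = Re (z ^ m) + cmod z ^ 2 * Im (z ^ m)"
  shows "a ^ m = 1"
proof -
  define A where "A = a ^ m"
  have "\<phi> 1 = a" "\<phi> 2 = 2 * a" using a(2) by auto
  hence at1: "Re A + Im A = 1" and at2: "2 ^ m * Re A + 4 * (2 ^ m * Im A) = 2 ^ m"
    using inv[of 1] inv[of 2] a(1) by (simp_all add: A_def norm_mult power_mult_distrib)
  have "(2::real) ^ m * (Re A + 4 * Im A) = 2 ^ m * 1"
    using at2 by (simp add: algebra_simps)
  hence "Re A + 4 * Im A = 1" by (subst (asm) mult_cancel_left) simp
  with at1 show ?thesis by (simp add: A_def complex_eq_iff)
qed

lemma stab_twisted: assumes m: "m \<ge> 2" shows "stab (pm m + (X2^2 + Y2^2) * qm m) = Km m"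
proof (intro set_eqI iffI)
  fix \<phi> assume \<phi>: "\<phi> \<in> stab (pm m + (X2^2 + Y2^2) * qm m)"
  obtain a where a: "cmod a = 1" "\<phi> = (\<lambda>z. a * z) \<or> \<phi> = (\<lambda>z. a * cnj z)"
    using O2_cases[OF stab_O2[OF \<phi>]] by blast
  have "\<forall>z. eval2 (pm m + (X2^2 + Y2^2) * qm m) (\<phi> z) = eval2 (pm m + (X2^2 + Y2^2) * qm m) z"
    using stab_iff[OF stab_O2[OF \<phi>]] \<phi> by blast
  hence inv: "\<And>z. Re (\<phi> z ^ m) + cmod (\<phi> z) ^ 2 * Im (\<phi> z ^ m) = Re (z ^ m) + cmod z ^ 2 * Im (z ^ m)"
    unfolding eval2_twisted by blast
  have am: "a ^ m = 1" using twisted_root[OF a inv] .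
  have "\<phi> \<noteq> (\<lambda>z. a * cnj z)"
  proof
    assume ph: "\<phi> = (\<lambda>z. a * cnj z)"
    (* at a point z0 of the unit circle with z0^m = i the two sides are -1 and 1 *)
    define z0 where "z0 = cis (pi / (2 * real m))"
    have "z0 ^ m = cis (real m * (pi / (2 * real m)))" unfolding z0_def by (rule Complex.DeMoivre)
    hence z0m: "z0 ^ m = \<i>" using m by simp
    have "cnj z0 ^ m = - \<i>" using z0m by (metis complex_cnj_power complex_cnj_i)
    hence "\<phi> z0 ^ m = - \<i>" using ph am by (simp add: power_mult_distrib)
    moreover have "cmod (\<phi> z0) = 1" "cmod z0 = 1" using ph a(1) by (simp_all add: norm_mult z0_def)
    ultimately show False using inv[of z0] z0m by simp
  qed
  thus "\<phi> \<in> Km m" using a(2) rotation_in_Km am m by auto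
next
  fix \<phi> assume "\<phi> \<in> Km m"
  then obtain a where a: "a ^ m = 1" "\<phi> = (\<lambda>z. a * z)" using Km_elements by blast
  have au: "cmod a = 1" using root_of_unity_unit[of m a] m a(1) by simp
  have "\<forall>z. eval2 (pm m + (X2^2 + Y2^2) * qm m) (a * z) = eval2 (pm m + (X2^2 + Y2^2) * qm m) z"
    unfolding eval2_twisted using a au by (simp add: power_mult_distrib norm_mult)
  thus "\<phi> \<in> stab (pm m + (X2^2 + Y2^2) * qm m)" using stab_rotation[OF au] a by simp
qed

lemma frequency_arith:
  assumes m: "m \<ge> 2" and md: "n mod m = d mod (m::nat)"
    and c: "e \<le> d" "d \<le> m + 1" "n \<le> d + e" "d \<le> n + e" "even (n + e + d)"
  shows "n = d \<or> (e = m \<and> (n = d + m \<or> n + m = d))"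
proof -
  have "m dvd (max n d - min n d)"
    using md mod_eq_dvd_iff_nat by (metis max_def min_def nat_le_linear)
  then obtain j where j: "max n d - min n d = m * j" by (auto simp: dvd_def)
  have "j \<le> 1"
  proof (rule ccontr)
    assume "\<not> j \<le> 1"
    hence "m * 2 \<le> m * j" by simp
    thus False using j c m by linarith
  qed
  hence "max n d - min n d = 0 \<or> max n d - min n d = m" using j by (cases "j = 0") auto
  thus ?thesis
  proof
    assume "max n d - min n d = m"
    hence nd: "n = d + m \<or> n + m = d" by linarith
    hence "m \<le> e" "e \<le> m + 1" using c by linarith+
    moreover have "e \<noteq> m + 1" using nd c(5) by auto
    ultimately show ?thesis using nd by linarith
  qed linarith
qed

lemma low_degree_not_Km: assumes m: "m \<ge> 2" and dP: "deg2 P < m + 2" shows "stab P \<noteq> Km m"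
proof
  assume st: "stab P = Km m"
  obtain Q where q: "polar_expansion (deg2 P) (\<lambda>w. of_real (eval2 P w)) Q"
    using eval2_polar_expansion by blast
  have freq: "n = deg2 P \<or> (e = m \<and> (n = deg2 P + m \<or> n + m = deg2 P))"
    if nz: "coeff (coeff Q n) e \<noteq> 0" for n e
  proof (rule frequency_arith[OF m])
    show "n mod m = deg2 P mod m" using frequency_congruence[OF q _ _ nz] m st sigma_in_Km by simp
  qed (use polar_expansion_bounds[OF q nz] dP in auto)
  obtain v where "cmod v = 1" "(\<lambda>z. v * cnj z) \<in> stab P"
    using reflection_in_stab[OF q _ freq] m by auto
  thus False using st reflection_notin_Km by blast
qed

lemma stab_x_plus_xy: "stab (X2 + X2 * Y2) = Km 1"
proof (intro set_eqI iffI)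
  fix \<phi> assume \<phi>: "\<phi> \<in> stab (X2 + X2 * Y2)"
  obtain a where a: "cmod a = 1" "\<phi> = (\<lambda>z. a * z) \<or> \<phi> = (\<lambda>z. a * cnj z)"
    using O2_cases[OF stab_O2[OF \<phi>]] by blast
  have inv: "\<And>z. Re (\<phi> z) + Re (\<phi> z) * Im (\<phi> z) = Re z + Re z * Im z"
    using stab_iff[OF stab_O2[OF \<phi>]] \<phi> by simp
  \<comment> \<open>the values at 1 and -1 force a = 1, and the value at 1 + i excludes conjugation\<close>
  have "\<phi> 1 = a" "\<phi> (-1) = - a" using a(2) by auto
  hence v: "Re a + Re a * Im a = 1" "- Re a + Re a * Im a = -1" using inv[of 1] inv[of "-1"] by simp_all
  hence "Re a = 1" by linarith
  with v(1) have "a = 1" by (simp add: complex_eq_iff)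
  hence "\<phi> = id" using a(2) inv[of "1 + \<i>"] by auto
  thus "\<phi> \<in> Km 1" unfolding Km_one by simp
next
  fix \<phi> :: "complex \<Rightarrow> complex" assume "\<phi> \<in> Km 1"
  hence "\<phi> = id" unfolding Km_one by simp
  thus "\<phi> \<in> stab (X2 + X2 * Y2)" using stab_iff[OF orthogonal_transformation_id] by (simp add: id_def)
qed

text \<open>In degree at most 1 the bounds on a polar expansion alone leave only the frequencies
  0 and \<plusminus>1 (with radial degree 1), so some reflection fixes P.\<close>
lemma low_degree_not_K1: assumes dP: "deg2 P < 2" shows "stab P \<noteq> Km 1"
proof
  assume st: "stab P = Km 1"
  obtain Q where q: "polar_expansion (deg2 P) (\<lambda>w. of_real (eval2 P w)) Q"
    using eval2_polar_expansion by blast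
  have freq: "n = deg2 P \<or> (e = 1 \<and> (n = deg2 P + 1 \<or> n + 1 = deg2 P))"
    if nz: "coeff (coeff Q n) e \<noteq> 0" for n e
    using polar_expansion_bounds[OF q nz] dP by presburger
  obtain v where "cmod v = 1" "(\<lambda>z. v * cnj z) \<in> stab P"
    using reflection_in_stab[OF q _ freq] by auto
  thus False using st reflection_notin_Km by blast
qed

theorem mainTheorem12:
  shows "(\<forall>m::nat. m \<ge> 1 \<longrightarrow>
            stab (pm m) = Dm m \<and> (\<forall>P. deg2 P < m \<longrightarrow> stab P \<noteq> Dm m))
       \<and> (\<forall>m::nat. m \<ge> 2 \<longrightarrow>
            stab (pm m + (X2^2 + Y2^2) * qm m) = Km m
            \<and> (\<forall>P. deg2 P < m + 2 \<longrightarrow> stab P \<noteq> Km m))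
       \<and> stab (X2 + X2 * Y2) = Km 1
       \<and> (\<forall>P. deg2 P < 2 \<longrightarrow> stab P \<noteq> Km 1)"
  using stab_pm low_degree_not_Dm stab_twisted low_degree_not_Km stab_x_plus_xy low_degree_not_K1
  by blast

end
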